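(* Let $n,k$ be integers with $0<k\le n$, let $f_j(\Delta_{n,k})$ denote the number of $j$-dimensional faces of the polytope $\Delta_{n,k}$ and $f_j(\Delta'_{n,k})$ the number of $j$-dimensional faces of the half-open hypersimplex $\Delta'_{n,k}$. Then $f_0(\Delta_{n,k})=\binom{n}{k}+\binom{n}{k-1}$, and for $j=1,2,\ldots,n$, $$ f_j(\Delta_{n,k})=f_j(\Delta'_{n,k})+\binom{n}{j+1}\sum_{s=\max\{0,k-1-j\}}^{k-2}\binom{n-j-1}{s}=\binom{n+1}{j+1}\sum_{s=\max\{0,k-j\}}^{k-1}\binom{n-j}{s}. $$
   Context: For integers $0<k\le n$, $\Delta_{n,k}=\{(x_1,\ldots,x_n)\in[0,1]^n : k-1\le x_1+\cdots+x_n\le k\}$ (a convex polytope) and $\Delta'_{n,k}=\{(x_1,\ldots,x_n)\in[0,1]^n : k-1< x_1+\cdots+x_n\le k\}$. A $j$-face of $\Delta'_{n,k}$ is a set $F\cap\Delta'_{n,k}$ where $F$ is a $j$-dimensional face of $\Delta_{n,k}$ with $F\cap\Delta'_{n,k}\neq\emptyset$. Binomial coefficients $\binom{a}{b}$ are $0$ when $b>a$ or $b<0$, and an empty sum is $0$. *)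

theory Defs
  imports "HOL-Analysis.Analysis"
begin

text \<open>Hypersimplex Delta_{n,k} in R^n, with n = CARD('n).\<close>
definition hypersimplex :: "nat \<Rightarrow> (real ^ 'n) set" where
  "hypersimplex k = {x. (\<forall>i. 0 \<le> x $ i \<and> x $ i \<le> 1) \<and>
      real k - 1 \<le> (\<Sum>i\<in>UNIV. x $ i) \<and> (\<Sum>i\<in>UNIV. x $ i) \<le> real k}"

definition half_open_hypersimplex :: "nat \<Rightarrow> (real ^ 'n) set" where
  "half_open_hypersimplex k = {x. (\<forall>i. 0 \<le> x $ i \<and> x $ i \<le> 1) \<and>
      real k - 1 < (\<Sum>i\<in>UNIV. x $ i) \<and> (\<Sum>i\<in>UNIV. x $ i) \<le> real k}"

definition num_faces :: "nat \<Rightarrow> 'a::euclidean_space set \<Rightarrow> nat" where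
  "num_faces j P = card {F. F face_of P \<and> aff_dim F = int j}"

definition half_open_faces :: "nat \<Rightarrow> nat \<Rightarrow> (real ^ 'n) set set" where
  "half_open_faces j k = {G. \<exists>F. F face_of (hypersimplex k :: (real ^ 'n) set) \<and>
       aff_dim F = int j \<and> F \<inter> half_open_hypersimplex k \<noteq> {} \<and>
       G = F \<inter> half_open_hypersimplex k}"

end

theory Submission
  imports Defs
begin

text \<open>Adding the slack coordinate x0 = k - (x1 + ... + xn) identifies Delta(n,k) with the set
  of points of [0,1]^(n+1) whose coordinates sum to k. A nonempty face is determined by the set W
  of coordinates that are constantly 1 on it and the set S of coordinates that vary on it; all
  other coordinates vanish. Conversely a disjoint pair (S, W) describes a nonempty face exactly
  when S = {} and |W| = k, or |W| < k < |W| + |S|, and that face has dimension |S| - 1 (a vertex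
  if S = {}). The faces missing Delta'(n,k) are those with x0 in W, and since Delta' is Delta
  cut by an open half-space, a face meeting Delta' is determined by its trace on Delta'. Counting
  disjoint pairs of subsets of given sizes of an (n+1)-element set gives the formulas.\<close>

lemma strict_convex_comb_eq_0:
  fixes u a b :: real
  assumes "0 < u" "u < 1" "0 \<le> a" "0 \<le> b" "(1 - u) * a + u * b = 0"
  shows "a = 0 \<and> b = 0"
proof -
  have "0 \<le> (1 - u) * a" "0 \<le> u * b"
    using assms by simp_all
  then have "(1 - u) * a = 0" "u * b = 0"
    using assms(5) by linarith+
  then show ?thesis using assms(1,2) by simp
qed

lemma sum_UNIV_option:
  "(\<Sum>i\<in>UNIV. f i) = f None + (\<Sum>j\<in>UNIV. f (Some j :: 'n::finite option))"
  by (simp add: UNIV_option_conv sum.reindex)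

lemma card_UNIV_option: "CARD('n::finite option) = Suc CARD('n)"
  by (simp add: UNIV_option_conv card_image)

lemma face_of_prolongation:
  fixes P :: "'a::real_vector set"
  assumes F: "F face_of P" and z: "z \<in> F" and y: "y \<in> P"
    and e: "0 < e" and w: "(1 + e) *\<^sub>R z - e *\<^sub>R y \<in> P"
  shows "y \<in> F"
proof (cases "y = z")
  case True
  then show ?thesis using z by simp
next
  case False
  define u where "u = 1 / (1 + e)"
  have u: "0 < u" "u < 1" "u * (1 + e) = 1"
    using e by (auto simp: u_def)
  have "(1 - u) *\<^sub>R y + u *\<^sub>R ((1 + e) *\<^sub>R z - e *\<^sub>R y)
      = (1 - u * (1 + e)) *\<^sub>R y + (u * (1 + e)) *\<^sub>R z"
    by (simp add: algebra_simps)
  then have "z = (1 - u) *\<^sub>R y + u *\<^sub>R ((1 + e) *\<^sub>R z - e *\<^sub>R y)"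
    using u(3) by simp
  moreover have "y \<noteq> (1 + e) *\<^sub>R z - e *\<^sub>R y"
    using False calculation by (auto simp: scaleR_collapse)
  ultimately have "z \<in> open_segment y ((1 + e) *\<^sub>R z - e *\<^sub>R y)"
    using u(1,2) by (auto simp: in_segment)
  then show ?thesis
    using F y w z by (auto simp: face_of_def)
qed

section \<open>Lifted coordinates\<close>

text \<open>Coordinate None is the slack coordinate k - (x1 + ... + xn).\<close>

definition lift :: "nat \<Rightarrow> real^'n \<Rightarrow> 'n option \<Rightarrow> real" where
  "lift k x i = (case i of None \<Rightarrow> real k - (\<Sum>j\<in>UNIV. x $ j) | Some j \<Rightarrow> x $ j)"

lemma lift_Some [simp]: "lift k x (Some j) = x $ j"
  by (simp add: lift_def)

lemma lift_None: "lift k x None = real k - (\<Sum>j\<in>UNIV. x $ j)"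
  by (simp add: lift_def)

lemma lift_affine:
  assumes "a + b = 1"
  shows "lift k (a *\<^sub>R x + b *\<^sub>R y) i = a * lift k x i + b * lift k y i"
proof (cases i)
  case None
  have "real k = a * real k + b * real k"
    using assms by (metis distrib_right mult_1)
  then show ?thesis
    using None by (simp add: lift_def sum.distrib sum_distrib_left algebra_simps)
qed simp

lemma continuous_on_lift: "continuous_on UNIV (\<lambda>x. lift k x i)"
  by (cases i) (auto simp: lift_def intro!: continuous_intros)

lemma sum_lift: "(\<Sum>i\<in>UNIV. lift k (x::real^'n) i) = real k"
  by (simp add: sum_UNIV_option lift_None)

lemma inj_lift: "inj (lift k)"
  by (rule injI) (metis lift_Some vec_eq_iff)

lemma lift_vector_of_coords:
  assumes "(\<Sum>i\<in>UNIV. t i) = real k"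
  shows "lift k (\<chi> j. t (Some j)) = t"
proof
  fix i show "lift k (\<chi> j. t (Some j)) i = t i"
    using assms by (cases i) (simp_all add: lift_None sum_UNIV_option)
qed

lemma hypersimplex_lift: "hypersimplex k = {x. \<forall>i. 0 \<le> lift k x i \<and> lift k x i \<le> 1}"
  unfolding hypersimplex_def by (auto simp: lift_def split: option.splits)

lemma half_open_hypersimplex_lift:
  "half_open_hypersimplex k = {x \<in> hypersimplex k. lift k x None < 1}"
  unfolding hypersimplex_def half_open_hypersimplex_def by (auto simp: lift_def)

lemma convex_hypersimplex: "convex (hypersimplex k)"
proof (rule convexI)
  fix x y :: "real^'n" and u v :: real
  assume x: "x \<in> hypersimplex k" and y: "y \<in> hypersimplex k"
    and uv: "0 \<le> u" "0 \<le> v" "u + v = 1"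
  have "0 \<le> u * lift k x i + v * lift k y i \<and> u * lift k x i + v * lift k y i \<le> 1" for i
  proof -
    have "0 \<le> lift k x i" "lift k x i \<le> 1" "0 \<le> lift k y i" "lift k y i \<le> 1"
      using x y by (auto simp: hypersimplex_lift)
    then have "u * lift k x i \<le> u" "v * lift k y i \<le> v"
      using uv by (auto intro: mult_left_le)
    then show ?thesis using uv \<open>0 \<le> lift k x i\<close> \<open>0 \<le> lift k y i\<close> by simp
  qed
  then show "u *\<^sub>R x + v *\<^sub>R y \<in> hypersimplex k"
    by (simp add: hypersimplex_lift lift_affine[OF uv(3)])
qed

lemma lift_midpoint: "lift k (midpoint x y) i = (lift k x i + lift k y i) / 2"
  using lift_affine[of "1/2" "1/2" k x y i] by (simp add: midpoint_def scaleR_add_right)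

lemma hypersimplex_prolongation:
  assumes y: "y \<in> hypersimplex k" and z: "\<forall>i\<in>S. 0 < lift k z i \<and> lift k z i < 1"
    and agree: "\<forall>i. i \<notin> S \<longrightarrow> lift k y i = lift k z i"
  obtains e where "0 < e" "(1 + e) *\<^sub>R z - e *\<^sub>R y \<in> hypersimplex k"
proof
  define e where "e = Min (insert 1 ((\<lambda>i. min (lift k z i) (1 - lift k z i)) ` S))"
  have e_le: "e \<le> lift k z i" "e \<le> 1 - lift k z i" if "i \<in> S" for i
    using Min_le[of _ "min (lift k z i) (1 - lift k z i)"] that unfolding e_def by fastforce+
  show "0 < e"
    using z by (auto simp: e_def Min_gr_iff)
  have lift_w: "lift k ((1 + e) *\<^sub>R z - e *\<^sub>R y) i = lift k z i + e * (lift k z i - lift k y i)" for i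
    using lift_affine[of "1 + e" "- e" k z y i] by (simp add: algebra_simps)
  show "(1 + e) *\<^sub>R z - e *\<^sub>R y \<in> hypersimplex k"
    unfolding hypersimplex_lift mem_Collect_eq
  proof
    fix i
    have y01: "0 \<le> lift k y i" "lift k y i \<le> 1"
      using y by (auto simp: hypersimplex_lift)
    show "0 \<le> lift k ((1 + e) *\<^sub>R z - e *\<^sub>R y) i \<and> lift k ((1 + e) *\<^sub>R z - e *\<^sub>R y) i \<le> 1"
    proof (cases "i \<in> S")
      case True
      then have "e \<le> lift k z i" "e \<le> 1 - lift k z i" "0 < lift k z i" "0 < e"
        using e_le z \<open>0 < e\<close> by auto
      moreover have "e * lift k y i \<le> e" "e * lift k z i \<le> e" "0 \<le> e * lift k z i" "0 \<le> e * lift k y i"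
        using y01 calculation by (auto intro: mult_left_le)
      ultimately show ?thesis
        using lift_w[of i] by (simp only: right_diff_distrib) linarith
    next
      case False
      then show ?thesis
        using lift_w[of i] y01 agree by simp
    qed
  qed
qed

section \<open>Faces of the hypersimplex in lifted coordinates\<close>

definition coord_flat :: "nat \<Rightarrow> 'n option set \<Rightarrow> 'n option set \<Rightarrow> (real^'n) set" where
  "coord_flat k S W =
     {x. (\<forall>i. i \<notin> S \<longrightarrow> i \<notin> W \<longrightarrow> lift k x i = 0) \<and> (\<forall>i\<in>W. lift k x i = 1)}"

definition coord_face :: "nat \<Rightarrow> 'n option set \<Rightarrow> 'n option set \<Rightarrow> (real^'n) set" where
  "coord_face k S W = hypersimplex k \<inter> coord_flat k S W"

definition free_coords :: "nat \<Rightarrow> (real^'n) set \<Rightarrow> 'n option set" where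
  "free_coords k C = {i. (\<exists>x\<in>C. lift k x i \<noteq> 0) \<and> (\<exists>x\<in>C. lift k x i \<noteq> 1)}"

definition one_coords :: "nat \<Rightarrow> (real^'n) set \<Rightarrow> 'n option set" where
  "one_coords k C = {i. \<forall>x\<in>C. lift k x i = 1}"

lemma affine_coord_flat: "affine (coord_flat k S W)"
  unfolding affine_def coord_flat_def by (auto simp: lift_affine)

lemma coord_face_face_of: "coord_face k S W face_of hypersimplex k"
  unfolding face_of_def
proof (intro conjI ballI impI)
  show "coord_face k S W \<subseteq> hypersimplex k"
    by (simp add: coord_face_def)
  show "convex (coord_face k S W)"
    unfolding coord_face_def
    by (intro convex_Int convex_hypersimplex affine_imp_convex affine_coord_flat)
next
  fix a b x
  assume a: "a \<in> hypersimplex k" and b: "b \<in> hypersimplex k"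
    and x: "x \<in> coord_face k S W" and seg: "x \<in> open_segment a b"
  obtain u where u: "0 < u" "u < 1" "x = (1 - u) *\<^sub>R a + u *\<^sub>R b"
    using seg by (auto simp: in_segment)
  have lift_x: "lift k x i = (1 - u) * lift k a i + u * lift k b i" for i
    using u(3) lift_affine[of "1 - u" u k a b i] by simp
  have bounds: "0 \<le> lift k a i" "lift k a i \<le> 1" "0 \<le> lift k b i" "lift k b i \<le> 1" for i
    using a b by (auto simp: hypersimplex_lift)
  have "lift k a i = 0 \<and> lift k b i = 0" if "lift k x i = 0" for i
    using strict_convex_comb_eq_0[OF u(1,2), of "lift k a i" "lift k b i"] that lift_x[of i] bounds[of i]
    by simp
  moreover have "lift k a i = 1 \<and> lift k b i = 1" if "lift k x i = 1" for i
    using strict_convex_comb_eq_0[OF u(1,2), of "1 - lift k a i" "1 - lift k b i"] that lift_x[of i] bounds[of i]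
    by (simp add: algebra_simps)
  ultimately show "a \<in> coord_face k S W" "b \<in> coord_face k S W"
    using a b x by (auto simp: coord_face_def coord_flat_def)
qed

lemma exists_point_strictly_inside_on:
  assumes C: "convex C" "C \<subseteq> hypersimplex k" "C \<noteq> {}" and U: "finite U"
    and single: "\<forall>i\<in>U. \<exists>w\<in>C. 0 < lift k w i \<and> lift k w i < 1"
  shows "\<exists>z\<in>C. \<forall>i\<in>U. 0 < lift k z i \<and> lift k z i < 1"
  using U single
proof (induction U rule: finite_induct)
  case empty
  then show ?case using C(3) by auto
next
  case (insert i U)
  obtain z where z: "z \<in> C" "\<forall>l\<in>U. 0 < lift k z l \<and> lift k z l < 1"
    using insert.IH insert.prems by blast
  obtain w where w: "w \<in> C" "0 < lift k w i" "lift k w i < 1"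
    using insert.prems by blast
  have bounds: "0 \<le> lift k x l \<and> lift k x l \<le> 1" if "x \<in> C" for x l
    using that C(2) by (auto simp: hypersimplex_lift)
  have "0 < lift k (midpoint z w) l \<and> lift k (midpoint z w) l < 1" if "l \<in> insert i U" for l
  proof -
    \<comment> \<open>a coordinate of the midpoint lies strictly inside (0,1) as soon as one of the two does,
      since both lie in [0,1]\<close>
    have "(0 < lift k z l \<and> lift k z l < 1) \<or> (0 < lift k w l \<and> lift k w l < 1)"
      using that z(2) w by auto
    then show ?thesis
      using bounds[OF z(1), of l] bounds[OF w(1), of l] by (auto simp: lift_midpoint)
  qed
  moreover have "midpoint z w \<in> C"
    using C(1) z(1) w(1) by (meson convex_contains_segment midpoint_in_closed_segment subsetD)
  ultimately show ?case by blast
qed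

lemma exists_point_strictly_inside:
  assumes C: "convex C" "C \<subseteq> hypersimplex k" "C \<noteq> {}"
  shows "\<exists>z\<in>C. \<forall>i\<in>free_coords k C. 0 < lift k z i \<and> lift k z i < 1"
proof (rule exists_point_strictly_inside_on[OF C finite], intro ballI)
  fix i assume "i \<in> free_coords k C"
  then obtain p q where pq: "p \<in> C" "q \<in> C" "lift k p i \<noteq> 0" "lift k q i \<noteq> 1"
    unfolding free_coords_def by blast
  then have "0 \<le> lift k p i" "lift k p i \<le> 1" "0 \<le> lift k q i" "lift k q i \<le> 1"
    using C(2) by (auto simp: hypersimplex_lift)
  then have "0 < lift k (midpoint p q) i \<and> lift k (midpoint p q) i < 1"
    using pq by (auto simp: lift_midpoint)
  moreover have "midpoint p q \<in> C"
    using C(1) pq(1,2) by (meson convex_contains_segment midpoint_in_closed_segment subsetD)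
  ultimately show "\<exists>w\<in>C. 0 < lift k w i \<and> lift k w i < 1" by blast
qed

lemma face_of_hypersimplex_eq_coord_face:
  assumes F: "F face_of hypersimplex k" and ne: "F \<noteq> {}"
  shows "F = coord_face k (free_coords k F) (one_coords k F)"
proof
  have sub: "F \<subseteq> hypersimplex k" and cvx: "convex F"
    using F by (auto simp: face_of_def)
  show "F \<subseteq> coord_face k (free_coords k F) (one_coords k F)"
    using sub by (auto simp: coord_face_def coord_flat_def free_coords_def one_coords_def)
  obtain z where z: "z \<in> F" "\<forall>i\<in>free_coords k F. 0 < lift k z i \<and> lift k z i < 1"
    using exists_point_strictly_inside[OF cvx sub ne] by blast
  show "coord_face k (free_coords k F) (one_coords k F) \<subseteq> F"
  proof
    fix y assume y: "y \<in> coord_face k (free_coords k F) (one_coords k F)"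
    then have yH: "y \<in> hypersimplex k"
      by (simp add: coord_face_def)
    have "lift k y i = lift k z i" if "i \<notin> free_coords k F" for i
      using that y z(1) by (cases "i \<in> one_coords k F")
        (auto simp: coord_face_def coord_flat_def free_coords_def one_coords_def)
    then obtain e where "0 < e" "(1 + e) *\<^sub>R z - e *\<^sub>R y \<in> hypersimplex k"
      using hypersimplex_prolongation[OF yH z(2)] by blast
    then show "y \<in> F"
      by (rule face_of_prolongation[OF F z(1) yH])
  qed
qed

definition admissible :: "nat \<Rightarrow> 'a set \<Rightarrow> 'a set \<Rightarrow> bool" where
  "admissible k S W \<longleftrightarrow> S \<inter> W = {} \<and>
     (if S = {} then card W = k else card W < k \<and> k < card W + card S)"

lemma sum_lift_free:
  assumes "S \<inter> W = {}" "x \<in> coord_flat k S W"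
  shows "(\<Sum>i\<in>S. lift k x i) = real k - real (card W)"
proof -
  have "real k = (\<Sum>i\<in>S \<union> W. lift k x i)"
    unfolding sum_lift[of k x, symmetric] using assms(2)
    by (intro sum.mono_neutral_right) (auto simp: coord_flat_def)
  also have "\<dots> = (\<Sum>i\<in>S. lift k x i) + real (card W)"
    using assms by (simp add: sum.union_disjoint coord_flat_def)
  finally show ?thesis by simp
qed

lemma admissible_if_strict_point:
  assumes SW: "S \<inter> W = {}"
    and z: "z \<in> coord_face k S W" "\<forall>i\<in>S. 0 < lift k z i \<and> lift k z i < 1"
  shows "admissible k S W"
proof -
  have sum_S: "(\<Sum>i\<in>S. lift k z i) = real k - real (card W)"
    using sum_lift_free[OF SW] z(1) by (simp add: coord_face_def)
  show ?thesis
  proof (cases "S = {}")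
    case True
    then show ?thesis using SW sum_S by (simp add: admissible_def)
  next
    case False
    have "0 < (\<Sum>i\<in>S. lift k z i)"
      using False z(2) by (intro sum_pos) auto
    moreover have "(\<Sum>i\<in>S. lift k z i) < (\<Sum>i\<in>S. 1)"
      using False z(2) by (intro sum_strict_mono) auto
    ultimately show ?thesis using SW sum_S False by (simp add: admissible_def)
  qed
qed

lemma obtain_strict_point:
  assumes adm: "admissible k S W"
  obtains z where "z \<in> coord_face k S W" "\<forall>i\<in>S. 0 < lift k z i \<and> lift k z i < 1"
proof -
  have SW: "S \<inter> W = {}"
    using adm by (simp add: admissible_def)
  define c where "c = (real k - real (card W)) / real (card S)"
  have c: "0 < c \<and> c < 1" if "i \<in> S" for i
  proof -
    have "card W < k" "k < card W + card S" "0 < card S"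
      using adm that by (auto simp: admissible_def card_gt_0_iff split: if_splits)
    then show ?thesis by (simp add: c_def divide_simps)
  qed
  \<comment> \<open>spread the remaining mass k - card W evenly over S\<close>
  define t where "t = (\<lambda>i. if i \<in> W then 1 else if i \<in> S then c else 0)"
  have "(\<Sum>i\<in>UNIV. t i) = (\<Sum>i\<in>S \<union> W. t i)"
    by (intro sum.mono_neutral_right) (auto simp: t_def)
  also have "\<dots> = (\<Sum>i\<in>S. t i) + (\<Sum>i\<in>W. t i)"
    using SW by (intro sum.union_disjoint) auto
  also have "\<dots> = real (card S) * c + real (card W)"
  proof -
    have "(\<Sum>i\<in>S. t i) = (\<Sum>i\<in>S. c)"
      by (rule sum.cong) (use SW in \<open>auto simp: t_def\<close>)
    moreover have "(\<Sum>i\<in>W. t i) = (\<Sum>i\<in>W. 1)"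
      by (rule sum.cong) (auto simp: t_def)
    ultimately show ?thesis by simp
  qed
  also have "\<dots> = real k"
    using adm by (cases "S = {}") (auto simp: admissible_def c_def)
  finally have lift_z: "lift k (\<chi> j. t (Some j)) = t"
    by (rule lift_vector_of_coords)
  show ?thesis
  proof
    show "(\<chi> j. t (Some j)) \<in> coord_face k S W"
      "\<forall>i\<in>S. 0 < lift k (\<chi> j. t (Some j)) i \<and> lift k (\<chi> j. t (Some j)) i < 1"
      unfolding coord_face_def coord_flat_def hypersimplex_lift Int_iff mem_Collect_eq lift_z
      using SW by (auto simp: t_def dest: c)
  qed
qed

lemma coords_of_coord_face:
  assumes z: "z \<in> coord_face k S W" "\<forall>i\<in>S. 0 < lift k z i \<and> lift k z i < 1"
  shows "free_coords k (coord_face k S W) = S" "one_coords k (coord_face k S W) = W"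
proof -
  have flat: "\<forall>i. i \<notin> S \<longrightarrow> i \<notin> W \<longrightarrow> lift k x i = 0" "\<forall>i\<in>W. lift k x i = 1"
    if "x \<in> coord_face k S W" for x
    using that by (auto simp: coord_face_def coord_flat_def)
  have "i \<in> S \<longleftrightarrow> i \<in> free_coords k (coord_face k S W)" for i
  proof
    assume "i \<in> S"
    then have "lift k z i \<noteq> 0" "lift k z i \<noteq> 1" using z(2) by auto
    then show "i \<in> free_coords k (coord_face k S W)"
      unfolding free_coords_def using z(1) by blast
  next
    assume "i \<in> free_coords k (coord_face k S W)"
    then show "i \<in> S"
      unfolding free_coords_def using flat by blast
  qed
  moreover have "i \<in> W \<longleftrightarrow> i \<in> one_coords k (coord_face k S W)" for i
  proof
    assume "i \<in> W"
    then show "i \<in> one_coords k (coord_face k S W)"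
      unfolding one_coords_def using flat by blast
  next
    assume "i \<in> one_coords k (coord_face k S W)"
    then have "lift k z i = 1" using z(1) by (simp add: one_coords_def)
    then have "i \<notin> S" using z(2) by auto
    then show "i \<in> W" using flat[OF z(1)] \<open>lift k z i = 1\<close> by auto
  qed
  ultimately show "free_coords k (coord_face k S W) = S" "one_coords k (coord_face k S W) = W"
    by blast+
qed

lemma admissible_coords_of_face:
  assumes F: "F face_of hypersimplex k" and ne: "F \<noteq> {}"
  shows "admissible k (free_coords k F) (one_coords k F)"
proof -
  have disj: "free_coords k F \<inter> one_coords k F = {}"
    by (auto simp: free_coords_def one_coords_def)
  have "convex F" "F \<subseteq> hypersimplex k"
    using F by (auto simp: face_of_def)
  then obtain z where "z \<in> F" "\<forall>i\<in>free_coords k F. 0 < lift k z i \<and> lift k z i < 1"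
    using exists_point_strictly_inside ne by blast
  then show ?thesis
    using admissible_if_strict_point[OF disj] face_of_hypersimplex_eq_coord_face[OF F ne] by auto
qed

lemma bij_betw_coord_face:
  "bij_betw (\<lambda>(S, W). coord_face k S W) {(S, W). admissible k S W}
     {F. F face_of hypersimplex k \<and> F \<noteq> {}}"
proof (rule bij_betw_byWitness[where f' = "\<lambda>F. (free_coords k F, one_coords k F)"])
  show "\<forall>p\<in>{(S, W). admissible k S W}.
      (\<lambda>F. (free_coords k F, one_coords k F)) ((\<lambda>(S, W). coord_face k S W) p) = p"
    by (auto elim!: obtain_strict_point dest: coords_of_coord_face)
  show "\<forall>F\<in>{F. F face_of hypersimplex k \<and> F \<noteq> {}}.
      (\<lambda>(S, W). coord_face k S W) ((\<lambda>F. (free_coords k F, one_coords k F)) F) = F"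
    using face_of_hypersimplex_eq_coord_face by auto
  show "(\<lambda>(S, W). coord_face k S W) ` {(S, W). admissible k S W}
      \<subseteq> {F. F face_of hypersimplex k \<and> F \<noteq> {}}"
    by (auto simp: coord_face_face_of elim!: obtain_strict_point)
  show "(\<lambda>F. (free_coords k F, one_coords k F)) ` {F. F face_of hypersimplex k \<and> F \<noteq> {}}
      \<subseteq> {(S, W). admissible k S W}"
    using admissible_coords_of_face by auto
qed

section \<open>Dimension of the faces\<close>

definition flat_vertex :: "nat \<Rightarrow> 'n option set \<Rightarrow> 'n option \<Rightarrow> real^'n" where
  "flat_vertex k W i =
     (\<chi> j. if Some j \<in> W then 1 else if Some j = i then real k - real (card W) else 0)"

lemma lift_flat_vertex:
  assumes "i \<notin> W"
  shows "lift k (flat_vertex k W i) = (\<lambda>l. if l \<in> W then 1 else if l = i then real k - real (card W) else 0)"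
proof -
  let ?t = "\<lambda>l. if l \<in> W then 1 else if l = i then real k - real (card W) else 0"
  have "(\<Sum>l\<in>UNIV. ?t l) = (\<Sum>l\<in>insert i W. ?t l)"
    by (intro sum.mono_neutral_right) auto
  also have "\<dots> = real k"
    using assms by (simp add: sum.insert_if)
  finally have "lift k (\<chi> j. ?t (Some j)) = ?t"
    by (rule lift_vector_of_coords)
  then show ?thesis
    by (simp add: flat_vertex_def)
qed

lemma affine_independent_flat_vertices:
  assumes SW: "S \<inter> W = {}" and "card W < k"
  shows "inj_on (flat_vertex k W) S" "\<not> affine_dependent (flat_vertex k W ` S)"
proof -
  have coord: "lift k (flat_vertex k W i) l = (if l = i then real k - real (card W) else 0)"
    if "i \<in> S" "l \<in> S" for i l
  proof -
    have "i \<notin> W" "l \<notin> W" using that SW by auto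
    then show ?thesis by (simp add: lift_flat_vertex)
  qed
  have r: "real k - real (card W) \<noteq> 0"
    using assms(2) by simp
  show "inj_on (flat_vertex k W) S"
  proof (rule inj_onI)
    fix i l assume il: "i \<in> S" "l \<in> S" "flat_vertex k W i = flat_vertex k W l"
    then have "lift k (flat_vertex k W i) i = lift k (flat_vertex k W l) i"
      by simp
    then show "i = l"
      using coord[of i i] coord[of l i] il r by (auto split: if_splits)
  qed
  show "\<not> affine_dependent (flat_vertex k W ` S)"
  proof
    assume "affine_dependent (flat_vertex k W ` S)"
    then obtain i where i: "i \<in> S"
      "flat_vertex k W i \<in> affine hull (flat_vertex k W ` S - {flat_vertex k W i})"
      by (auto simp: affine_dependent_def)
    \<comment> \<open>all other vertices lie in the hyperplane where coordinate i vanishes\<close>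
    have "flat_vertex k W ` S - {flat_vertex k W i} \<subseteq> {y. lift k y i = 0}"
      using i(1) coord by auto
    moreover have "affine {y. lift k y i = (0::real)}"
      unfolding affine_def by (auto simp: lift_affine)
    ultimately have "lift k (flat_vertex k W i) i = 0"
      using i(2) hull_minimal by blast
    then show False using coord[OF i(1) i(1)] r by simp
  qed
qed

lemma coord_flat_eq_sum_flat_vertices:
  assumes SW: "S \<inter> W = {}" and "card W < k" and x: "x \<in> coord_flat k S W"
  shows "(\<Sum>i\<in>S. (lift k x i / (real k - real (card W))) *\<^sub>R flat_vertex k W i) = x"
proof -
  define r where "r = real k - real (card W)"
  have r: "0 < r" using assms(2) by (simp add: r_def)
  have sum_S: "(\<Sum>i\<in>S. lift k x i / r) = 1"
    using sum_lift_free[OF SW x] r by (simp add: sum_divide_distrib[symmetric] r_def)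
  have "(\<Sum>i\<in>S. (lift k x i / r) *\<^sub>R flat_vertex k W i) $ j = x $ j" for j
  proof (cases "Some j \<in> W")
    case True
    then have "(\<Sum>i\<in>S. (lift k x i / r) *\<^sub>R flat_vertex k W i) $ j = (\<Sum>i\<in>S. lift k x i / r)"
      by (simp add: flat_vertex_def)
    also have "\<dots> = lift k x (Some j)"
      using sum_S x True unfolding coord_flat_def by auto
    finally show ?thesis by simp
  next
    case False
    then have "(\<Sum>i\<in>S. (lift k x i / r) *\<^sub>R flat_vertex k W i) $ j
        = (\<Sum>i\<in>S. lift k x i / r * flat_vertex k W i $ j)"
      by simp
    also have "\<dots> = (\<Sum>i\<in>S. if i = Some j then lift k x i else 0)"
      using r False by (intro sum.cong) (auto simp: flat_vertex_def r_def)
    also have "\<dots> = x $ j"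
      using x False by (auto simp: sum.delta' coord_flat_def)
    finally show ?thesis .
  qed
  then show ?thesis
    by (simp add: vec_eq_iff r_def)
qed

lemma affine_hull_flat_vertices:
  assumes SW: "S \<inter> W = {}" and "card W < k"
  shows "affine hull (flat_vertex k W ` S) = coord_flat k S W"
proof
  have "flat_vertex k W i \<in> coord_flat k S W" if "i \<in> S" for i
  proof -
    have "i \<notin> W" using that SW by auto
    then show ?thesis using that by (simp add: coord_flat_def lift_flat_vertex)
  qed
  then show "affine hull (flat_vertex k W ` S) \<subseteq> coord_flat k S W"
    by (intro hull_minimal affine_coord_flat) auto
  show "coord_flat k S W \<subseteq> affine hull (flat_vertex k W ` S)"
  proof
    fix x assume x: "x \<in> coord_flat k S W"
    note inj = affine_independent_flat_vertices(1)[OF assms]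
    define u where "u = (\<lambda>y. lift k x (inv_into S (flat_vertex k W) y) / (real k - real (card W)))"
    have u: "u (flat_vertex k W i) = lift k x i / (real k - real (card W))" if "i \<in> S" for i
      using inv_into_f_f[OF inj that] by (simp add: u_def)
    have "sum u (flat_vertex k W ` S) = 1"
      using u sum_lift_free[OF SW x] assms(2)
      by (simp add: sum.reindex[OF inj] sum_divide_distrib[symmetric])
    moreover have "(\<Sum>y\<in>flat_vertex k W ` S. u y *\<^sub>R y) = x"
      using u coord_flat_eq_sum_flat_vertices[OF assms x] by (simp add: sum.reindex[OF inj])
    ultimately show "x \<in> affine hull (flat_vertex k W ` S)"
      by (auto simp: affine_hull_finite)
  qed
qed

lemma aff_dim_coord_flat:
  assumes "S \<inter> W = {}" "card W < k"
  shows "aff_dim (coord_flat k S W) = int (card S) - 1"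
proof -
  have "aff_dim (coord_flat k S W) = aff_dim (flat_vertex k W ` S)"
    unfolding affine_hull_flat_vertices[OF assms, symmetric] by (rule aff_dim_affine_hull)
  also have "\<dots> = int (card S) - 1"
    using aff_dim_affine_independent[OF affine_independent_flat_vertices(2)[OF assms]]
      card_image[OF affine_independent_flat_vertices(1)[OF assms]] by simp
  finally show ?thesis .
qed

lemma coord_face_no_free_unique:
  assumes "x \<in> coord_face k {} W" "y \<in> coord_face k {} W"
  shows "x = y"
proof -
  have "lift k x i = lift k y i" for i
    using assms by (cases "i \<in> W") (auto simp: coord_face_def coord_flat_def)
  then have "lift k x = lift k y" by blast
  then show ?thesis using inj_lift by (metis injD)
qed

lemma aff_dim_coord_face:
  assumes adm: "admissible k S W"
  shows "aff_dim (coord_face k S W) = (if S = {} then 0 else int (card S) - 1)"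
proof -
  obtain z where z: "z \<in> coord_face k S W" "\<forall>i\<in>S. 0 < lift k z i \<and> lift k z i < 1"
    using adm by (rule obtain_strict_point)
  show ?thesis
  proof (cases "S = {}")
    case True
    then have "coord_face k S W = {z}"
      using z(1) coord_face_no_free_unique by blast
    then show ?thesis using True by simp
  next
    case False
    \<comment> \<open>near z the flat lies inside the face, so both have the same dimension\<close>
    define U where "U = (\<Inter>i\<in>S. {x. 0 < lift k x i} \<inter> {x. lift k x i < 1})"
    have "open U"
      unfolding U_def
      by (intro open_INT open_Int ballI finite open_Collect_less continuous_on_lift continuous_on_const)
    have "coord_flat k S W \<inter> U \<subseteq> coord_face k S W"
      by (auto simp: U_def coord_face_def coord_flat_def hypersimplex_lift less_imp_le)
        (metis less_imp_le order.refl zero_le_one)+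
    moreover have "z \<in> coord_flat k S W \<inter> U"
      using z by (auto simp: U_def coord_face_def)
    ultimately have "aff_dim (coord_flat k S W) \<le> aff_dim (coord_face k S W)"
      using aff_dim_convex_Int_open[OF affine_imp_convex[OF affine_coord_flat] \<open>open U\<close>]
        aff_dim_subset by (metis empty_iff)
    moreover have "aff_dim (coord_face k S W) \<le> aff_dim (coord_flat k S W)"
      by (intro aff_dim_subset) (simp add: coord_face_def)
    moreover have "aff_dim (coord_flat k S W) = int (card S) - 1"
      using adm False by (intro aff_dim_coord_flat) (auto simp: admissible_def)
    ultimately show ?thesis
      using False by simp
  qed
qed

lemma aff_dim_coord_face_eq_iff:
  assumes "admissible k S W"
  shows "aff_dim (coord_face k S W) = int j \<longleftrightarrow> S = {} \<and> j = 0 \<or> card S = Suc j"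
  using aff_dim_coord_face[OF assms] by auto

lemma card_faces_hypersimplex:
  "card {F. F face_of hypersimplex k \<and> aff_dim F = int j \<and> P F}
     = card {(S, W). admissible k S W \<and> (S = {} \<and> j = 0 \<or> card S = Suc j) \<and> P (coord_face k S W)}"
  (is "card ?faces = card ?pairs")
proof -
  have img: "(\<lambda>(S, W). coord_face k S W) ` ?pairs = ?faces"
  proof (intro equalityI subsetI)
    fix F assume "F \<in> (\<lambda>(S, W). coord_face k S W) ` ?pairs"
    then show "F \<in> ?faces"
      by (auto simp: aff_dim_coord_face coord_face_face_of)
  next
    fix F assume F: "F \<in> ?faces"
    then have face: "F face_of hypersimplex k" and "F \<noteq> {}" by auto
    then have adm: "admissible k (free_coords k F) (one_coords k F)"
      and eq: "coord_face k (free_coords k F) (one_coords k F) = F"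
      by (rule admissible_coords_of_face, rule face_of_hypersimplex_eq_coord_face[symmetric])
    then have "free_coords k F = {} \<and> j = 0 \<or> card (free_coords k F) = Suc j"
      using aff_dim_coord_face_eq_iff[OF adm] F by simp
    then show "F \<in> (\<lambda>(S, W). coord_face k S W) ` ?pairs"
      using F adm eq by (intro image_eqI[of _ _ "(free_coords k F, one_coords k F)"]) auto
  qed
  moreover have "?pairs \<subseteq> {(S, W). admissible k S W}"
    by auto
  ultimately have "bij_betw (\<lambda>(S, W). coord_face k S W) ?pairs ?faces"
    using bij_betw_subset[OF bij_betw_coord_face] by blast
  then show ?thesis
    by (simp add: bij_betw_same_card)
qed

lemma card_faces_hypersimplex_pos:
  assumes "0 < j"
  shows "card {F. F face_of hypersimplex k \<and> aff_dim F = int j \<and> P F}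
     = card {(S, W). admissible k S W \<and> card S = Suc j \<and> P (coord_face k S W)}"
proof -
  have "{(S, W). admissible k S W \<and> (S = {} \<and> j = 0 \<or> card S = Suc j) \<and> P (coord_face k S W)}
      = {(S, W). admissible k S W \<and> card S = Suc j \<and> P (coord_face k S W)}"
    using assms by simp
  then show ?thesis
    by (simp only: card_faces_hypersimplex)
qed

section \<open>Faces meeting the half-open hypersimplex\<close>

lemma face_of_eq_if_Int_open_halfspace_eq:
  fixes P :: "'a::real_inner set"
  assumes F: "F face_of P" and F': "F' face_of P" and P: "P \<subseteq> {x. b \<le> a \<bullet> x}"
    and ne: "F \<inter> {x. b < a \<bullet> x} \<noteq> {}"
    and eq: "F \<inter> {x. b < a \<bullet> x} = F' \<inter> {x. b < a \<bullet> x}"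
  shows "F = F'"
proof -
  \<comment> \<open>the midpoint of a point of P and a point of the open half-space lies in the open half-space\<close>
  have "G \<subseteq> G'" if G: "G face_of P" and G': "G' face_of P"
    and ne: "G \<inter> {x. b < a \<bullet> x} \<noteq> {}"
    and eq: "G \<inter> {x. b < a \<bullet> x} = G' \<inter> {x. b < a \<bullet> x}" for G G'
  proof
    fix y assume y: "y \<in> G"
    obtain z where z: "z \<in> G" "b < a \<bullet> z"
      using ne by auto
    have yz: "y \<in> P" "z \<in> P"
      using G y z(1) face_of_imp_subset by blast+
    show "y \<in> G'"
    proof (cases "y = z")
      case True
      then show ?thesis using z eq by auto
    next
      case False
      have "midpoint y z \<in> G"
        using face_of_imp_convex[OF G] y z(1)
        by (meson convex_contains_segment midpoint_in_closed_segment subsetD)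
      moreover have "b < a \<bullet> midpoint y z"
        using P yz(1) z(2) by (auto simp: midpoint_def inner_add_right)
      ultimately have "midpoint y z \<in> G'"
        using eq by blast
      moreover have "midpoint y z \<in> open_segment y z"
        using False by simp
      ultimately show ?thesis
        using G' yz unfolding face_of_def by blast
    qed
  qed
  then show ?thesis
    using F F' ne eq by (metis subset_antisym)
qed

lemma half_open_hypersimplex_eq_Int:
  "half_open_hypersimplex k = hypersimplex k \<inter> {x. real k - 1 < (\<chi> i. 1) \<bullet> x}"
  by (auto simp: hypersimplex_def half_open_hypersimplex_def inner_vec_def)

lemma inj_on_Int_half_open_hypersimplex:
  "inj_on (\<lambda>F. F \<inter> half_open_hypersimplex k)
     {F. F face_of hypersimplex k \<and> F \<inter> half_open_hypersimplex k \<noteq> {}}"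
proof (rule inj_onI, clarify)
  fix F F' :: "(real^'n) set"
  assume "F face_of hypersimplex k" "F' face_of hypersimplex k"
    and "F \<inter> half_open_hypersimplex k \<noteq> {}"
    and "F \<inter> half_open_hypersimplex k = F' \<inter> half_open_hypersimplex k"
  moreover have "hypersimplex k \<subseteq> {x. real k - 1 \<le> (\<chi> i. 1) \<bullet> (x :: real^'n)}"
    by (auto simp: hypersimplex_def inner_vec_def)
  moreover have "G \<inter> half_open_hypersimplex k = G \<inter> {x. real k - 1 < (\<chi> i. 1) \<bullet> x}"
    if "G face_of hypersimplex k" for G :: "(real^'n) set"
    using face_of_imp_subset[OF that] by (auto simp: half_open_hypersimplex_eq_Int)
  ultimately show "F = F'"
    by (intro face_of_eq_if_Int_open_halfspace_eq[of F "hypersimplex k" F']) simp_all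
qed

lemma coord_face_Int_half_open_eq_empty_iff:
  assumes adm: "admissible k S W"
  shows "coord_face k S W \<inter> half_open_hypersimplex k = {} \<longleftrightarrow> None \<in> W"
proof
  assume "None \<in> W"
  then show "coord_face k S W \<inter> half_open_hypersimplex k = {}"
    by (auto simp: coord_face_def coord_flat_def half_open_hypersimplex_lift)
next
  assume empty: "coord_face k S W \<inter> half_open_hypersimplex k = {}"
  obtain z where z: "z \<in> coord_face k S W" "\<forall>i\<in>S. 0 < lift k z i \<and> lift k z i < 1"
    using adm by (rule obtain_strict_point)
  show "None \<in> W"
  proof (rule ccontr)
    assume "None \<notin> W"
    then have "lift k z None < 1"
      using z by (cases "None \<in> S") (auto simp: coord_face_def coord_flat_def)
    then show False
      using empty z(1) by (auto simp: half_open_hypersimplex_lift coord_face_def)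
  qed
qed

lemma card_subsets_card_mem:
  assumes "finite X" "finite R"
  shows "card {W. W \<subseteq> X \<and> card W \<in> R} = (\<Sum>b\<in>R. card X choose b)"
proof -
  have "{W. W \<subseteq> X \<and> card W \<in> R} = (\<Union>b\<in>R. {W. W \<subseteq> X \<and> card W = b})"
    by auto
  also have "card \<dots> = (\<Sum>b\<in>R. card {W. W \<subseteq> X \<and> card W = b})"
    using assms by (intro card_UN_disjoint) (auto intro: finite_subset[of _ "Pow X"])
  also have "\<dots> = (\<Sum>b\<in>R. card X choose b)"
    using assms(1) by (simp add: n_subsets)
  finally show ?thesis .
qed

lemma card_disjoint_subset_pairs:
  assumes U: "finite U" and R: "finite R"
  shows "card {(S, W). S \<subseteq> U \<and> W \<subseteq> U \<and> S \<inter> W = {} \<and> card S = a \<and> card W \<in> R}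
       = (card U choose a) * (\<Sum>b\<in>R. (card U - a) choose b)"
proof -
  have "{(S, W). S \<subseteq> U \<and> W \<subseteq> U \<and> S \<inter> W = {} \<and> card S = a \<and> card W \<in> R}
      = Sigma {S. S \<subseteq> U \<and> card S = a} (\<lambda>S. {W. W \<subseteq> U - S \<and> card W \<in> R})"
    by auto
  also have "card \<dots> = (\<Sum>S | S \<subseteq> U \<and> card S = a. card {W. W \<subseteq> U - S \<and> card W \<in> R})"
    using U by (intro card_SigmaI) (auto intro: finite_subset[of _ "Pow U"])
  also have "\<dots> = (\<Sum>S | S \<subseteq> U \<and> card S = a. \<Sum>b\<in>R. (card U - a) choose b)"
  proof (rule sum.cong)
    fix S assume "S \<in> {S. S \<subseteq> U \<and> card S = a}"
    then have "card (U - S) = card U - a"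
      using U by (auto simp: card_Diff_subset finite_subset)
    then show "card {W. W \<subseteq> U - S \<and> card W \<in> R} = (\<Sum>b\<in>R. (card U - a) choose b)"
      using card_subsets_card_mem[of "U - S" R] U R by simp
  qed simp
  also have "\<dots> = (card U choose a) * (\<Sum>b\<in>R. (card U - a) choose b)"
    using U by (simp add: n_subsets)
  finally show ?thesis .
qed

lemma card_disjoint_subset_pairs_mem:
  assumes U: "finite U" and x: "x \<in> U" and R: "finite R"
  shows "card {(S, W). S \<subseteq> U \<and> W \<subseteq> U \<and> S \<inter> W = {} \<and> x \<in> W \<and> card S = a \<and> card W \<in> R}
       = ((card U - 1) choose a) * (\<Sum>b | Suc b \<in> R. (card U - 1 - a) choose b)"
proof -
  let ?U = "U - {x}"
  have card_insert: "card (insert x W) = Suc (card W)" if "W \<subseteq> ?U" for W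
  proof -
    have "finite W" "x \<notin> W"
      using that U by (auto intro: finite_subset)
    then show ?thesis by simp
  qed
  have card_pos: "0 < card W" if "W \<subseteq> U" "x \<in> W" for W
    using that U by (auto simp: card_gt_0_iff intro: finite_subset)
  have "bij_betw (\<lambda>(S, W). (S, insert x W))
      {(S, W). S \<subseteq> ?U \<and> W \<subseteq> ?U \<and> S \<inter> W = {} \<and> card S = a \<and> card W \<in> {b. Suc b \<in> R}}
      {(S, W). S \<subseteq> U \<and> W \<subseteq> U \<and> S \<inter> W = {} \<and> x \<in> W \<and> card S = a \<and> card W \<in> R}"
    by (rule bij_betw_byWitness[where f' = "\<lambda>(S, W). (S, W - {x})"])
      (use x in \<open>auto simp: card_insert card_pos\<close>)
  then have "card {(S, W). S \<subseteq> U \<and> W \<subseteq> U \<and> S \<inter> W = {} \<and> x \<in> W \<and> card S = a \<and> card W \<in> R}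
      = card {(S, W). S \<subseteq> ?U \<and> W \<subseteq> ?U \<and> S \<inter> W = {} \<and> card S = a \<and> card W \<in> {b. Suc b \<in> R}}"
    by (simp add: bij_betw_same_card)
  also have "\<dots> = ((card U - 1) choose a) * (\<Sum>b | Suc b \<in> R. (card U - 1 - a) choose b)"
    using card_disjoint_subset_pairs[of ?U "{b. Suc b \<in> R}" a] U x R
    by (simp add: finite_vimageI[of R Suc, unfolded vimage_def])
  finally show ?thesis .
qed

lemma card_admissible_pairs:
  "card {(S, W :: 'a::finite set). admissible k S W \<and> card S = Suc j}
     = (CARD('a) choose Suc j) * (\<Sum>b | b < k \<and> k < b + Suc j. (CARD('a) - Suc j) choose b)"
proof -
  have "{(S, W :: 'a set). admissible k S W \<and> card S = Suc j}
      = {(S, W). S \<subseteq> UNIV \<and> W \<subseteq> UNIV \<and> S \<inter> W = {} \<and> card S = Suc j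
          \<and> card W \<in> {b. b < k \<and> k < b + Suc j}}"
    by (auto simp: admissible_def)
  then show ?thesis
    using card_disjoint_subset_pairs[of "UNIV :: 'a set" "{b. b < k \<and> k < b + Suc j}" "Suc j"] by simp
qed

lemma card_admissible_pairs_mem:
  assumes "0 < k"
  shows "card {(S, W :: 'a::finite set). admissible k S W \<and> card S = Suc j \<and> x \<in> W}
     = ((CARD('a) - 1) choose Suc j) *
       (\<Sum>b | b < k - 1 \<and> k - 1 < b + Suc j. (CARD('a) - 1 - Suc j) choose b)"
proof -
  have "{(S, W :: 'a set). admissible k S W \<and> card S = Suc j \<and> x \<in> W}
      = {(S, W). S \<subseteq> UNIV \<and> W \<subseteq> UNIV \<and> S \<inter> W = {} \<and> x \<in> W \<and> card S = Suc j
          \<and> card W \<in> {b. b < k \<and> k < b + Suc j}}"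
    by (auto simp: admissible_def)
  moreover have "{b. Suc b \<in> {b. b < k \<and> k < b + Suc j}} = {b. b < k - 1 \<and> k - 1 < b + Suc j}"
    using assms by auto
  ultimately show ?thesis
    using card_disjoint_subset_pairs_mem[of "UNIV :: 'a set" x "{b. b < k \<and> k < b + Suc j}" "Suc j"] by simp
qed

lemma card_admissible_pairs_no_free:
  "card {(S, W :: 'a::finite set). admissible k S W \<and> S = {}} = CARD('a) choose k"
proof -
  have "{(S, W :: 'a set). admissible k S W \<and> S = {}} = Pair {} ` {W. W \<subseteq> UNIV \<and> card W = k}"
    by (auto simp: admissible_def)
  moreover have "card (Pair {} ` {W :: 'a set. W \<subseteq> UNIV \<and> card W = k}) = card {W :: 'a set. W \<subseteq> UNIV \<and> card W = k}"
    by (rule card_image) (simp add: inj_on_def)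
  ultimately show ?thesis
    using n_subsets[of "UNIV :: 'a set" k] by simp
qed

lemma num_faces_0_hypersimplex:
  "num_faces 0 (hypersimplex k :: (real^'n) set) = Suc CARD('n) choose k"
proof -
  have "{(S, W :: 'n option set). admissible k S W \<and> (S = {} \<or> card S = Suc 0)}
      = {(S, W). admissible k S W \<and> S = {}}"
    by (auto simp: admissible_def card_Suc_eq)
  then show ?thesis
    using card_faces_hypersimplex[of k 0 "\<lambda>_ :: (real^'n) set. True"]
    by (simp add: num_faces_def card_admissible_pairs_no_free card_UNIV_option)
qed

lemma num_faces_hypersimplex:
  assumes "0 < j"
  shows "num_faces j (hypersimplex k :: (real^'n) set)
    = (Suc CARD('n) choose Suc j) * (\<Sum>b | b < k \<and> k < b + Suc j. (CARD('n) - j) choose b)"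
  using card_faces_hypersimplex_pos[OF assms, of k "\<lambda>_ :: (real^'n) set. True"]
  by (simp add: num_faces_def card_admissible_pairs card_UNIV_option)

lemma card_half_open_faces:
  assumes "0 < j"
  shows "card (half_open_faces j k :: (real^'n) set set)
    = card {(S, W :: 'n option set). admissible k S W \<and> card S = Suc j \<and> None \<notin> W}"
proof -
  let ?meets = "{F :: (real^'n) set. F face_of hypersimplex k \<and> aff_dim F = int j
    \<and> F \<inter> half_open_hypersimplex k \<noteq> {}}"
  have "(half_open_faces j k :: (real^'n) set set) = (\<lambda>F. F \<inter> half_open_hypersimplex k) ` ?meets"
    unfolding half_open_faces_def image_def by auto
  moreover have "inj_on (\<lambda>F :: (real^'n) set. F \<inter> half_open_hypersimplex k) ?meets"
    by (rule inj_on_subset[OF inj_on_Int_half_open_hypersimplex]) auto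
  ultimately have "card (half_open_faces j k :: (real^'n) set set) = card ?meets"
    by (simp add: card_image)
  also have "\<dots> = card {(S, W). admissible k S W \<and> card S = Suc j
      \<and> coord_face k S W \<inter> (half_open_hypersimplex k :: (real^'n) set) \<noteq> {}}"
    by (rule card_faces_hypersimplex_pos[OF assms])
  also have "{(S, W). admissible k S W \<and> card S = Suc j
      \<and> coord_face k S W \<inter> (half_open_hypersimplex k :: (real^'n) set) \<noteq> {}}
      = {(S, W). admissible k S W \<and> card S = Suc j \<and> None \<notin> W}"
  proof (rule set_eqI)
    fix p :: "'n option set \<times> 'n option set"
    obtain S W where p: "p = (S, W)" by fastforce
    show "p \<in> {(S, W). admissible k S W \<and> card S = Suc j
        \<and> coord_face k S W \<inter> (half_open_hypersimplex k :: (real^'n) set) \<noteq> {}}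
      \<longleftrightarrow> p \<in> {(S, W). admissible k S W \<and> card S = Suc j \<and> None \<notin> W}"
      unfolding p by (simp add: coord_face_Int_half_open_eq_empty_iff cong: conj_cong)
  qed
  finally show ?thesis .
qed

lemma num_faces_hypersimplex_eq_half_open:
  assumes "0 < j" "0 < k"
  shows "num_faces j (hypersimplex k :: (real^'n) set)
    = card (half_open_faces j k :: (real^'n) set set)
      + (CARD('n) choose Suc j) * (\<Sum>b | b < k - 1 \<and> k - 1 < b + Suc j. (CARD('n) - Suc j) choose b)"
proof -
  let ?pairs = "\<lambda>P. {(S, W :: 'n option set). admissible k S W \<and> card S = Suc j \<and> P W}"
  have "num_faces j (hypersimplex k :: (real^'n) set) = card (?pairs (\<lambda>_. True))"
    using card_faces_hypersimplex_pos[OF assms(1), of k "\<lambda>_ :: (real^'n) set. True"]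
    by (simp add: num_faces_def)
  also have "?pairs (\<lambda>_. True) = ?pairs (\<lambda>W. None \<notin> W) \<union> ?pairs (\<lambda>W. None \<in> W)"
    by auto
  also have "card \<dots> = card (?pairs (\<lambda>W. None \<notin> W)) + card (?pairs (\<lambda>W. None \<in> W))"
    by (rule card_Un_disjoint) auto
  also have "card (?pairs (\<lambda>W. None \<notin> W)) = card (half_open_faces j k :: (real^'n) set set)"
    by (rule card_half_open_faces[OF assms(1), symmetric])
  also have "card (?pairs (\<lambda>W. None \<in> W))
      = (CARD('n) choose Suc j) * (\<Sum>b | b < k - 1 \<and> k - 1 < b + Suc j. (CARD('n) - Suc j) choose b)"
    using card_admissible_pairs_mem[OF assms(2), of j "None :: 'n option"]
    by (simp add: card_UNIV_option)
  finally show ?thesis .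
qed

lemma sum_nat_int_interval:
  "(\<Sum>s\<in>{max 0 (int k - int j) .. int k - 1}. f (nat s)) = (\<Sum>b | b < k \<and> k < b + Suc j. f b)"
proof (rule sum.reindex_bij_witness[of _ int nat])
  fix s assume "s \<in> {max 0 (int k - int j) .. int k - 1}"
  then show "int (nat s) = s" "nat s \<in> {b. b < k \<and> k < b + Suc j}"
    by auto
next
  fix b assume "b \<in> {b. b < k \<and> k < b + Suc j}"
  then show "nat (int b) = b" "int b \<in> {max 0 (int k - int j) .. int k - 1}"
    by auto
qed simp

theorem corollary1p4:
  fixes k :: nat
  assumes "0 < k" and "k \<le> CARD('n::finite)"
  shows "num_faces 0 (hypersimplex k :: (real ^ 'n) set) = (CARD('n) choose k) + (CARD('n) choose (k - 1))
     \<and> (\<forall>j\<in>{1..CARD('n)}.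
          num_faces j (hypersimplex k :: (real ^ 'n) set)
            = card (half_open_faces j k :: (real ^ 'n) set set)
              + (CARD('n) choose (j + 1)) *
                (\<Sum>s\<in>{max 0 (int k - 1 - int j) .. int k - 2}. (CARD('n) - j - 1) choose nat s)
        \<and> num_faces j (hypersimplex k :: (real ^ 'n) set)
            = ((CARD('n) + 1) choose (j + 1)) *
                (\<Sum>s\<in>{max 0 (int k - int j) .. int k - 1}. (CARD('n) - j) choose nat s))"
proof (intro conjI ballI)
  show "num_faces 0 (hypersimplex k :: (real ^ 'n) set) = (CARD('n) choose k) + (CARD('n) choose (k - 1))"
    using assms(1) by (cases k) (simp_all add: num_faces_0_hypersimplex)
next
  fix j assume "j \<in> {1..CARD('n)}"
  then have j: "0 < j" by simp
  have shift: "int k - 1 - int j = int (k - 1) - int j" "int k - 2 = int (k - 1) - 1"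
    using assms(1) by simp_all
  show "num_faces j (hypersimplex k :: (real ^ 'n) set)
      = card (half_open_faces j k :: (real ^ 'n) set set)
        + (CARD('n) choose (j + 1)) *
          (\<Sum>s\<in>{max 0 (int k - 1 - int j) .. int k - 2}. (CARD('n) - j - 1) choose nat s)"
    unfolding shift sum_nat_int_interval num_faces_hypersimplex_eq_half_open[OF j assms(1)]
    by simp
  show "num_faces j (hypersimplex k :: (real ^ 'n) set)
      = ((CARD('n) + 1) choose (j + 1)) *
          (\<Sum>s\<in>{max 0 (int k - int j) .. int k - 1}. (CARD('n) - j) choose nat s)"
    unfolding sum_nat_int_interval num_faces_hypersimplex[OF j] by simp
qed

end
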